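(* Let $H^{(2)}_n=\sum_{0<j\leqslant n}1/j^2$ for $n=0,1,2,\ldots$ (so $H^{(2)}_0=0$), and let $(F_n)_{n\geqslant0}$, $(L_n)_{n\geqslant0}$ be the Fibonacci and Lucas numbers. For $k\geqslant0$ define $$u_k=\begin{cases}5^{k/2}F_k & \text{if } 2\mid k,\\ 5^{(k-1)/2}L_k & \text{if } 2\nmid k,\end{cases}\qquad v_k=\begin{cases}5^{k/2}L_k & \text{if } 2\mid k,\\ 5^{(k+1)/2}F_k & \text{if } 2\nmid k.\end{cases}$$ Then: (i) $$\sum_{k=1}^\infty\frac{H_{k-1}^{(2)}}{k^2\binom{2k}k}=\frac{\pi^4}{1944},$$ $$\sum_{k=1}^\infty\frac{L_{2k}H_{k-1}^{(2)}}{k^2\binom{2k}k}=\frac{41\pi^4}{7500},\qquad \sum_{k=1}^\infty\frac{F_{2k}H_{k-1}^{(2)}}{k^2\binom{2k}k}=\frac{2\pi^4}{375\sqrt5},$$ $$\sum_{k=1}^\infty\frac{v_kH_{k-1}^{(2)}}{k^2\binom{2k}k}=\frac{34\pi^4}{1875},\qquad \sum_{k=1}^\infty\frac{u_kH_{k-1}^{(2)}}{k^2\binom{2k}k}=\frac{2\pi^4}{125\sqrt5}.$$ (ii) For every real $x$ with $0\leqslant x<4$, $$\sum_{k=1}^\infty\frac{H_{k-1}^{(2)}x^k}{k\binom{2k}k}=\frac43\sqrt{\frac{x}{4-x}}\,\arcsin^3\frac{\sqrt x}2.$$ In particular, $$\sum_{k=1}^\infty\frac{H_{k-1}^{(2)}}{k\binom{2k}k}=\frac{\pi^3}{162\sqrt3}\qquad\text{and}\qquad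 \sum_{k=1}^\infty\frac{3^kH_{k-1}^{(2)}}{k\binom{2k}k}=\frac{4\pi^3}{27\sqrt3}.$$
   Context: Fibonacci numbers: $F_0=0$, $F_1=1$, $F_{n+1}=F_n+F_{n-1}$ for $n\geqslant1$. Lucas numbers: $L_0=2$, $L_1=1$, $L_{n+1}=L_n+L_{n-1}$ for $n\geqslant1$. $H^{(2)}_n$ is the second-order harmonic number $\sum_{0<j\leqslant n}1/j^2$. *)

theory Defs
  imports "HOL-Analysis.Analysis" "HOL-Number_Theory.Fib"
begin

fun lucas :: "nat \<Rightarrow> nat" where
  "lucas 0 = 2"
| "lucas (Suc 0) = 1"
| "lucas (Suc (Suc n)) = lucas (Suc n) + lucas n"

definition harm2 :: "nat \<Rightarrow> real" where
  "harm2 n = (\<Sum>j=1..n. 1 / (real j)^2)"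

definition u_seq :: "nat \<Rightarrow> real" where
  "u_seq k = (if even k then 5 ^ (k div 2) * real (fib k)
              else 5 ^ ((k - 1) div 2) * real (lucas k))"

definition v_seq :: "nat \<Rightarrow> real" where
  "v_seq k = (if even k then 5 ^ (k div 2) * real (lucas k)
              else 5 ^ ((k + 1) div 2) * real (fib k))"

end

theory Submission
  imports Defs
begin

(*
  Substituting s = sin t turns (1 - s^2) f''(s) - s f'(s) into the second t-derivative of f (sin t);
  on the coefficients of f s = \<Sum>n. a n * s^n it acts as a n |-> (n+2)(n+1) a (n+2) - n^2 a n.
  For c k = 4^k / (k^2 binom(2k,k)) it maps the even series \<Sum>k. c k s^(2k) to the constant 4,
  which gives the classical \<Sum>k. c k s^(2k) = 2 arcsin^2 s, and it maps \<Sum>k. H2(k-1) c k s^(2k) to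
  \<Sum>k. 4 c k s^(2k) = 8 t^2; integrating twice in t gives 2/3 t^4 = 2/3 arcsin^4 s.
  Putting x = 4 s^2 gives the series in x, and the one with k instead of k^2 in the denominator
  is s f'(s) / 2. The Fibonacci and Lucas sums follow from the Binet formulas, since (3 +- sqrt 5)/2
  and (5 +- sqrt 5)/2 are 4 sin^2 of 3pi/10, pi/10, 2pi/5 and pi/5.
*)

section \<open>Power series composed with the sine\<close>

definition powser_conv_unit :: "(nat \<Rightarrow> real) \<Rightarrow> bool" where
  "powser_conv_unit a \<longleftrightarrow> (\<forall>s::real. \<bar>s\<bar> < 1 \<longrightarrow> summable (\<lambda>n. a n * s^n))"

definition powser_val :: "(nat \<Rightarrow> real) \<Rightarrow> real \<Rightarrow> real" where
  "powser_val a s = (\<Sum>n. a n * s^n)"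

lemma powser_conv_unit_diffs: "powser_conv_unit a \<Longrightarrow> powser_conv_unit (diffs a)"
  unfolding powser_conv_unit_def by (auto intro: termdiff_converges[where K=1])

lemma powser_conv_unit_bounded:
  assumes "\<And>n. \<bar>a n\<bar> \<le> M"
  shows "powser_conv_unit a"
  unfolding powser_conv_unit_def
proof (intro allI impI)
  fix s :: real
  assume s: "\<bar>s\<bar> < 1"
  show "summable (\<lambda>n. a n * s^n)"
  proof (rule summable_comparison_test')
    show "summable (\<lambda>n. M * \<bar>s\<bar>^n)"
      using s by (intro summable_mult summable_geometric) auto
    show "norm (a n * s^n) \<le> M * \<bar>s\<bar>^n" for n
      using assms[of n] by (auto simp: abs_mult power_abs intro: mult_right_mono)
  qed
qed

lemma sums_powser_val:
  "powser_conv_unit a \<Longrightarrow> \<bar>s\<bar> < 1 \<Longrightarrow> (\<lambda>n. a n * s^n) sums powser_val a s"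
  unfolding powser_val_def powser_conv_unit_def by (simp add: summable_sums)

lemma powser_val_0 [simp]: "powser_val a 0 = a 0"
  unfolding powser_val_def using powser_zero[of a] by simp

lemma powser_val_cmult:
  "powser_conv_unit a \<Longrightarrow> \<bar>s\<bar> < 1 \<Longrightarrow> powser_val (\<lambda>n. c * a n) s = c * powser_val a s"
  using sums_mult[OF sums_powser_val, of a s c] unfolding powser_val_def
  by (simp add: sums_iff mult.assoc)

lemma has_real_derivative_powser_val:
  "powser_conv_unit a \<Longrightarrow> \<bar>s\<bar> < 1 \<Longrightarrow>
     (powser_val a has_real_derivative powser_val (diffs a) s) (at s)"
  unfolding powser_val_def powser_conv_unit_def by (rule termdiffs_strong'[where K=1]) auto

lemma sums_index_times_coeff:
  assumes "(\<lambda>n. diffs a n * s^n) sums S"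
  shows "(\<lambda>n. real n * a n * s^n) sums (s * S)"
proof -
  have "(\<lambda>n. s * (diffs a n * s^n)) sums (s * S)"
    by (rule sums_mult[OF assms])
  then have "(\<lambda>n. (\<lambda>n. real n * a n * s^n) (Suc n)) sums (s * S)"
    by (simp add: diffs_def algebra_simps)
  then show ?thesis
    by (subst (asm) sums_Suc_iff) simp
qed

text \<open>The coefficients of \<open>(1 - s\<^sup>2) f'' - s f'\<close> for \<open>f s = \<Sum>n. a n * s\<^sup>n\<close>; at \<open>s = sin t\<close>
  this is the second derivative of \<open>f (sin t)\<close> with respect to \<open>t\<close>.\<close>

definition sin_ode_coeffs :: "(nat \<Rightarrow> real) \<Rightarrow> nat \<Rightarrow> real" where
  "sin_ode_coeffs a n = real (n+2) * real (n+1) * a (n+2) - (real n)^2 * a n"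

lemma powser_val_sin_ode_coeffs:
  assumes conv: "powser_conv_unit a" and s: "\<bar>s\<bar> < 1"
  shows "powser_val (sin_ode_coeffs a) s =
           powser_val (diffs (diffs a)) s * (1 - s^2) - powser_val (diffs a) s * s"
proof -
  note conv' = powser_conv_unit_diffs[OF conv] powser_conv_unit_diffs[OF powser_conv_unit_diffs[OF conv]]
  have D2: "(\<lambda>n. diffs (diffs a) n * s^n) sums powser_val (diffs (diffs a)) s"
    by (rule sums_powser_val[OF conv'(2) s])
  have D1: "(\<lambda>n. real n * a n * s^n) sums (s * powser_val (diffs a) s)"
    by (rule sums_index_times_coeff[OF sums_powser_val[OF conv'(1) s]])
  have "(\<lambda>n. s * (real n * diffs a n * s^n)) sums (s * (s * powser_val (diffs (diffs a)) s))"
    by (rule sums_mult[OF sums_index_times_coeff[OF D2]])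
  then have "(\<lambda>n. (\<lambda>n. real n * (real n - 1) * a n * s^n) (Suc n))
               sums (s^2 * powser_val (diffs (diffs a)) s)"
    by (simp add: diffs_def algebra_simps power2_eq_square)
  then have D0: "(\<lambda>n. real n * (real n - 1) * a n * s^n) sums (s^2 * powser_val (diffs (diffs a)) s)"
    by (subst (asm) sums_Suc_iff) simp
  have "(\<lambda>n. diffs (diffs a) n * s^n - real n * (real n - 1) * a n * s^n - real n * a n * s^n) sums
          (powser_val (diffs (diffs a)) s - s^2 * powser_val (diffs (diffs a)) s - s * powser_val (diffs a) s)"
    by (intro sums_diff D2 D1 D0)
  moreover have "(\<lambda>n. diffs (diffs a) n * s^n - real n * (real n - 1) * a n * s^n - real n * a n * s^n)
                   = (\<lambda>n. sin_ode_coeffs a n * s^n)"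
    by (rule ext) (simp add: sin_ode_coeffs_def diffs_def algebra_simps power2_eq_square)
  ultimately show ?thesis
    unfolding powser_val_def by (simp add: sums_iff algebra_simps)
qed

lemma abs_sin_less_one:
  assumes "\<bar>t\<bar> < pi/2"
  shows "\<bar>sin t\<bar> < 1"
proof -
  have "cos t > 0"
    using assms by (intro cos_gt_zero_pi) auto
  then have "(sin t)^2 < 1"
    using sin_squared_eq[of t] by simp
  then show ?thesis
    by (simp add: abs_square_less_1)
qed

lemma has_real_derivative_powser_val_sin:
  assumes "powser_conv_unit a" "\<bar>t\<bar> < pi/2"
  shows "((\<lambda>t. powser_val a (sin t)) has_real_derivative powser_val (diffs a) (sin t) * cos t) (at t)"
  using DERIV_chain2[OF has_real_derivative_powser_val[OF assms(1) abs_sin_less_one[OF assms(2)]] DERIV_sin] .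

lemma has_real_derivative_powser_diffs_sin:
  assumes conv: "powser_conv_unit a" and t: "\<bar>t\<bar> < pi/2"
  shows "((\<lambda>t. powser_val (diffs a) (sin t) * cos t)
           has_real_derivative powser_val (sin_ode_coeffs a) (sin t)) (at t)"
proof -
  have "((\<lambda>t. powser_val (diffs a) (sin t) * cos t) has_real_derivative
      powser_val (diffs (diffs a)) (sin t) * cos t * cos t - powser_val (diffs a) (sin t) * sin t) (at t)"
    using DERIV_mult[OF has_real_derivative_powser_val_sin[OF powser_conv_unit_diffs[OF conv] t] DERIV_cos[of t]]
    by (simp add: algebra_simps)
  moreover have "cos t * cos t = 1 - (sin t)^2"
    using sin_cos_squared_add[of t] by (simp add: power2_eq_square)
  ultimately show ?thesis
    using powser_val_sin_ode_coeffs[OF conv abs_sin_less_one[OF t]] by (simp add: mult.assoc)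
qed

lemma DERIV_eq_on_interval:
  fixes f g :: "real \<Rightarrow> real"
  assumes f: "\<And>y. 0 \<le> y \<Longrightarrow> y < T \<Longrightarrow> (f has_real_derivative D y) (at y)"
    and g: "\<And>y. 0 \<le> y \<Longrightarrow> y < T \<Longrightarrow> (g has_real_derivative D y) (at y)"
    and "f 0 = g 0" "0 \<le> t" "t < T"
  shows "f t = g t"
proof (cases "t = 0")
  case False
  have deriv: "((\<lambda>y. f y - g y) has_real_derivative 0) (at y)" if "0 \<le> y" "y < T" for y
    using DERIV_diff[OF f g, OF that that] by simp
  have "f t - g t = f 0 - g 0"
  proof (rule DERIV_isconst2[of 0 t])
    show "continuous_on {0..t} (\<lambda>y. f y - g y)"
      using assms by (intro continuous_at_imp_continuous_on ballI DERIV_isCont[OF deriv]) auto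
  qed (use assms False deriv in auto)
  with \<open>f 0 = g 0\<close> show ?thesis by simp
qed (use assms in simp)

lemma powser_val_sin_eqI:
  assumes conv: "powser_conv_unit a"
    and P: "\<And>y. 0 \<le> y \<Longrightarrow> y < pi/2 \<Longrightarrow> (P has_real_derivative P' y) (at y)"
    and P': "\<And>y. 0 \<le> y \<Longrightarrow> y < pi/2 \<Longrightarrow>
               (P' has_real_derivative powser_val (sin_ode_coeffs a) (sin y)) (at y)"
    and init: "P 0 = a 0" "P' 0 = a 1"
    and t: "0 \<le> t" "t < pi/2"
  shows "powser_val (diffs a) (sin t) * cos t = P' t" "powser_val a (sin t) = P t"
proof -
  have D1: "powser_val (diffs a) (sin y) * cos y = P' y" if "0 \<le> y" "y < pi/2" for y
    by (rule DERIV_eq_on_interval[OF has_real_derivative_powser_diffs_sin[OF conv] P' _ that])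
       (use init in \<open>auto simp: diffs_def\<close>)
  then show "powser_val (diffs a) (sin t) * cos t = P' t"
    using t .
  show "powser_val a (sin t) = P t"
  proof (rule DERIV_eq_on_interval[where D = P', OF _ P _ t])
    fix y :: real
    assume y: "0 \<le> y" "y < pi/2"
    show "((\<lambda>t. powser_val a (sin t)) has_real_derivative P' y) (at y)"
      using has_real_derivative_powser_val_sin[OF conv, of y] D1[OF y] y by simp
  next
    show "powser_val a (sin 0) = P 0"
      using init by simp
  qed
qed

section \<open>The series for arcsin squared and arcsin to the fourth\<close>

lemma powser_val_const: "powser_val (\<lambda>n. if n = 0 then c else 0) s = c"
proof -
  have "(\<lambda>n. (if n = 0 then c else 0) * s^n) = (\<lambda>n. if n = 0 then c else 0)"
    by auto
  then show ?thesis
    unfolding powser_val_def using sums_single[of 0 "\<lambda>_. c"] by (simp add: sums_iff)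
qed

lemma central_binomial_Suc_nat:
  "((2 * Suc k) choose Suc k) * (Suc k)^2 = (2*k + 2) * (2*k + 1) * ((2*k) choose k)"
proof -
  have "fact (Suc k) * fact (Suc k) * ((2 * Suc k) choose Suc k) = fact (2*k + 2)"
    using binomial_fact_lemma[of "Suc k" "2 * Suc k"] by (simp add: mult_2)
  moreover have "fact k * fact k * ((2*k) choose k) = fact (2*k)"
    using binomial_fact_lemma[of k "2*k"] by (simp add: mult_2)
  moreover have "(fact (2*k + 2) :: nat) = (2*k + 2) * (2*k + 1) * fact (2*k)"
    by (simp add: algebra_simps)
  ultimately have "fact k * fact k * (((2 * Suc k) choose Suc k) * (Suc k)^2) =
                   fact k * fact k * ((2*k + 2) * (2*k + 1) * ((2*k) choose k))"
    by (simp add: power2_eq_square algebra_simps)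
  then show ?thesis
    by simp
qed

lemma central_binomial_Suc:
  "real ((2 * Suc k) choose Suc k) * (real k + 1)^2 =
     (2 * real k + 2) * (2 * real k + 1) * real ((2*k) choose k)"
proof -
  have "real (((2 * Suc k) choose Suc k) * (Suc k)^2) = real ((2*k + 2) * (2*k + 1) * ((2*k) choose k))"
    by (simp only: central_binomial_Suc_nat)
  then show ?thesis
    by (simp only: of_nat_mult of_nat_power of_nat_add of_nat_Suc of_nat_1 of_nat_numeral)
       (simp add: ac_simps del: binomial_Suc_Suc)
qed

text \<open>At \<open>k = 0\<close> the division by zero yields \<open>0\<close>, the correct constant term.\<close>

definition central_binomial_recip :: "nat \<Rightarrow> real" where
  "central_binomial_recip k = 4^k / ((real k)^2 * real ((2*k) choose k))"

lemma central_binomial_recip_Suc: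
  "(2 * real k + 2) * (2 * real k + 1) * central_binomial_recip (Suc k) =
     4 * 4^k / real ((2*k) choose k)"
proof -
  have pos: "(2 * real k + 2) * (2 * real k + 1) > 0"
    by (simp add: add_pos_nonneg)
  have "central_binomial_recip (Suc k) = 4 * 4^k / (real ((2 * Suc k) choose Suc k) * (real k + 1)^2)"
    unfolding central_binomial_recip_def by (simp add: mult.commute add.commute del: binomial_Suc_Suc)
  also have "\<dots> = 4 * 4^k / ((2 * real k + 2) * (2 * real k + 1) * real ((2*k) choose k))"
    by (simp only: central_binomial_Suc)
  finally show ?thesis
    using pos by simp
qed

lemma central_binomial_recip_diag:
  "k \<noteq> 0 \<Longrightarrow> (real k)^2 * central_binomial_recip k = 4^k / real ((2*k) choose k)"
  unfolding central_binomial_recip_def by simp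

lemma central_binomial_recip_nonneg: "central_binomial_recip k \<ge> 0"
  unfolding central_binomial_recip_def by simp

lemma index_times_central_binomial_recip_le: "real k * central_binomial_recip k \<le> 2"
proof (cases "k = 0")
  case False
  have "real k * central_binomial_recip k = 4^k / (real k * real ((2*k) choose k))"
    unfolding central_binomial_recip_def by (simp add: power2_eq_square)
  also have "\<dots> \<le> 4^k / (real k * (4^k / (2 * real k)))"
    using False central_binomial_lower_bound[of k]
    by (intro divide_left_mono mult_left_mono mult_pos_pos) auto
  also have "\<dots> = 2"
    using False by simp
  finally show ?thesis .
qed simp

lemma central_binomial_recip_le: "central_binomial_recip k \<le> 2"
proof (cases "k = 0")
  case False
  then have "central_binomial_recip k \<le> real k * central_binomial_recip k"
    using central_binomial_recip_nonneg[of k] mult_right_mono[of 1 "real k"] by simp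
  then show ?thesis
    using index_times_central_binomial_recip_le[of k] by simp
qed (simp add: central_binomial_recip_def)

lemma harm2_nonneg: "harm2 n \<ge> 0"
  unfolding harm2_def by (auto intro: sum_nonneg)

lemma harm2_le: "harm2 n \<le> real n"
proof -
  have "harm2 n \<le> (\<Sum>j=1..n. 1)"
    unfolding harm2_def by (intro sum_mono) (simp add: field_simps)
  then show ?thesis
    by simp
qed

definition even_coeffs :: "(nat \<Rightarrow> real) \<Rightarrow> nat \<Rightarrow> real" where
  "even_coeffs f n = (if even n then f (n div 2) else 0)"

lemma powser_conv_unit_even_coeffs:
  "(\<And>k. \<bar>f k\<bar> \<le> M) \<Longrightarrow> powser_conv_unit (even_coeffs f)"
  by (rule powser_conv_unit_bounded[of _ M]) (auto simp: even_coeffs_def intro: order_trans[OF abs_ge_zero])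

lemma sin_ode_coeffs_even_coeffs:
  "sin_ode_coeffs (even_coeffs f) (2*k) =
     (2 * real k + 2) * (2 * real k + 1) * f (Suc k) - 4 * (real k)^2 * f k"
  "odd n \<Longrightarrow> sin_ode_coeffs (even_coeffs f) n = 0"
  by (simp_all add: sin_ode_coeffs_def even_coeffs_def power2_eq_square algebra_simps)

definition arcsin_sq_coeffs :: "nat \<Rightarrow> real" where
  "arcsin_sq_coeffs = even_coeffs (\<lambda>k. central_binomial_recip k / 2)"

definition arcsin_pow4_coeffs :: "nat \<Rightarrow> real" where
  "arcsin_pow4_coeffs = even_coeffs (\<lambda>k. harm2 (k - 1) * central_binomial_recip k)"

lemma sin_ode_coeffs_arcsin_sq:
  "sin_ode_coeffs arcsin_sq_coeffs n = (if n = 0 then 2 else 0)"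
proof (cases "even n")
  case True
  then obtain k where n: "n = 2*k"
    by blast
  show ?thesis
  proof (cases "k = 0")
    case True
    then show ?thesis
      using n by (simp add: arcsin_sq_coeffs_def sin_ode_coeffs_def even_coeffs_def central_binomial_recip_def)
  next
    case False
    have "sin_ode_coeffs arcsin_sq_coeffs n =
          ((2 * real k + 2) * (2 * real k + 1) * central_binomial_recip (Suc k)
            - 4 * ((real k)^2 * central_binomial_recip k)) / 2"
      unfolding n arcsin_sq_coeffs_def sin_ode_coeffs_even_coeffs by (simp add: algebra_simps)
    also have "\<dots> = 0"
      using False by (simp add: central_binomial_recip_Suc central_binomial_recip_diag)
    finally show ?thesis
      using n False by simp
  qed
next
  case False
  then show ?thesis
    using odd_pos[of n] by (simp add: arcsin_sq_coeffs_def sin_ode_coeffs_even_coeffs)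
qed

lemma sin_ode_coeffs_arcsin_pow4:
  "sin_ode_coeffs arcsin_pow4_coeffs n = 8 * arcsin_sq_coeffs n"
proof (cases "even n")
  case True
  then obtain k where n: "n = 2*k"
    by blast
  show ?thesis
  proof (cases "k = 0")
    case True
    then show ?thesis
      using n by (simp add: arcsin_sq_coeffs_def arcsin_pow4_coeffs_def sin_ode_coeffs_def
          even_coeffs_def central_binomial_recip_def harm2_def)
  next
    case False
    have "sin_ode_coeffs arcsin_pow4_coeffs n =
          harm2 k * ((2 * real k + 2) * (2 * real k + 1) * central_binomial_recip (Suc k))
            - 4 * harm2 (k - 1) * ((real k)^2 * central_binomial_recip k)"
      unfolding n arcsin_pow4_coeffs_def sin_ode_coeffs_even_coeffs by (simp add: algebra_simps)
    also have "\<dots> = 4 * (harm2 k - harm2 (k - 1)) * 4^k / real ((2*k) choose k)"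
      by (simp only: central_binomial_recip_Suc central_binomial_recip_diag[OF False])
         (simp add: field_simps)
    also have "harm2 k - harm2 (k - 1) = 1 / (real k)^2"
      using False by (cases k) (simp_all add: harm2_def)
    finally show ?thesis
      unfolding n arcsin_sq_coeffs_def even_coeffs_def central_binomial_recip_def by simp
  qed
next
  case False
  then show ?thesis
    by (simp add: arcsin_sq_coeffs_def arcsin_pow4_coeffs_def sin_ode_coeffs_even_coeffs even_coeffs_def)
qed

lemma powser_conv_unit_arcsin_sq: "powser_conv_unit arcsin_sq_coeffs"
  unfolding arcsin_sq_coeffs_def
  by (rule powser_conv_unit_even_coeffs[of _ 1])
     (use central_binomial_recip_le central_binomial_recip_nonneg in auto)

lemma powser_conv_unit_arcsin_pow4: "powser_conv_unit arcsin_pow4_coeffs"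
  unfolding arcsin_pow4_coeffs_def
proof (rule powser_conv_unit_even_coeffs[of _ 2])
  fix k
  have "harm2 (k - 1) * central_binomial_recip k \<le> real k * central_binomial_recip k"
    using harm2_le[of "k - 1"] central_binomial_recip_nonneg[of k]
    by (intro mult_right_mono) auto
  then show "\<bar>harm2 (k - 1) * central_binomial_recip k\<bar> \<le> 2"
    using index_times_central_binomial_recip_le[of k] harm2_nonneg central_binomial_recip_nonneg[of k]
    by simp
qed

lemma powser_val_arcsin_sq_sin:
  assumes "0 \<le> t" "t < pi/2"
  shows "powser_val arcsin_sq_coeffs (sin t) = t^2"
proof (rule powser_val_sin_eqI(2)[where P = "\<lambda>t. t^2" and P' = "\<lambda>t. 2 * t",
                                  OF powser_conv_unit_arcsin_sq _ _ _ _ assms])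
  show "((\<lambda>t. t^2) has_real_derivative 2 * y) (at y)" for y
    by (auto intro!: derivative_eq_intros)
  show "((\<lambda>t. 2 * t) has_real_derivative powser_val (sin_ode_coeffs arcsin_sq_coeffs) (sin y)) (at y)"
    for y
    by (auto intro!: derivative_eq_intros simp: sin_ode_coeffs_arcsin_sq[abs_def] powser_val_const)
qed (simp_all add: arcsin_sq_coeffs_def even_coeffs_def central_binomial_recip_def)

lemma powser_val_arcsin_pow4_sin:
  assumes "0 \<le> t" "t < pi/2"
  shows "powser_val (diffs arcsin_pow4_coeffs) (sin t) * cos t = 8/3 * t^3"
    and "powser_val arcsin_pow4_coeffs (sin t) = 2/3 * t^4"
proof -
  have "((\<lambda>t. 8/3 * t^3) has_real_derivative powser_val (sin_ode_coeffs arcsin_pow4_coeffs) (sin y)) (at y)"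
    if y: "0 \<le> y" "y < pi/2" for y
  proof -
    have "powser_val (sin_ode_coeffs arcsin_pow4_coeffs) (sin y) = 8 * y^2"
      using powser_val_cmult[OF powser_conv_unit_arcsin_sq abs_sin_less_one, of y 8]
        powser_val_arcsin_sq_sin[OF y] y
      by (simp add: sin_ode_coeffs_arcsin_pow4[abs_def])
    then show ?thesis
      by (auto intro!: derivative_eq_intros)
  qed
  moreover have "((\<lambda>t. 2/3 * t^4) has_real_derivative 8/3 * y^3) (at y)" for y
    by (auto intro!: derivative_eq_intros)
  moreover have "arcsin_pow4_coeffs 0 = 0" "arcsin_pow4_coeffs 1 = 0"
    by (simp_all add: arcsin_pow4_coeffs_def even_coeffs_def harm2_def)
  ultimately show "powser_val (diffs arcsin_pow4_coeffs) (sin t) * cos t = 8/3 * t^3"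
    and "powser_val arcsin_pow4_coeffs (sin t) = 2/3 * t^4"
    using powser_val_sin_eqI[where P = "\<lambda>t. 2/3 * t^4" and P' = "\<lambda>t. 8/3 * t^3",
                             OF powser_conv_unit_arcsin_pow4 _ _ _ _ assms]
    by simp_all
qed

lemma sums_even_coeffs_Suc:
  assumes "(\<lambda>n. even_coeffs f n * c n) sums S" "f 0 = 0"
  shows "(\<lambda>n. f (Suc n) * c (2 * Suc n)) sums S"
proof -
  have mono: "strict_mono (\<lambda>k::nat. 2 * k)"
    by (rule strict_monoI) simp
  have "(\<lambda>k. even_coeffs f (2 * k) * c (2 * k)) sums S"
    by (rule iffD2[OF sums_mono_reindex[OF mono] assms(1)]) (auto simp: even_coeffs_def elim!: evenE)
  then have "(\<lambda>k. f k * c (2 * k)) sums S"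
    by (simp add: even_coeffs_def)
  then show ?thesis
    using assms(2) sums_Suc_iff[of "\<lambda>k. f k * c (2 * k)"] by simp
qed

lemma sums_harm2_sin_sq:
  assumes "0 \<le> t" "t < pi/2"
  shows "(\<lambda>n. let k = Suc n in harm2 (k - 1) * (4 * sin t ^ 2) ^ k / ((real k)^2 * real ((2*k) choose k)))
           sums (2/3 * t^4)"
proof -
  have "(\<lambda>n. arcsin_pow4_coeffs n * sin t ^ n) sums (2/3 * t^4)"
    using sums_powser_val[OF powser_conv_unit_arcsin_pow4 abs_sin_less_one, of t]
      powser_val_arcsin_pow4_sin(2)[OF assms] assms
    by simp
  then have "(\<lambda>n. harm2 (Suc n - 1) * central_binomial_recip (Suc n) * sin t ^ (2 * Suc n)) sums (2/3 * t^4)"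
    unfolding arcsin_pow4_coeffs_def by (rule sums_even_coeffs_Suc) (simp add: central_binomial_recip_def)
  moreover have "harm2 (Suc n - 1) * central_binomial_recip (Suc n) * sin t ^ (2 * Suc n) =
      (let k = Suc n in harm2 (k - 1) * (4 * sin t ^ 2) ^ k / ((real k)^2 * real ((2*k) choose k)))" for n
    by (simp add: Let_def central_binomial_recip_def power_mult power_mult_distrib power2_eq_square
        del: of_nat_Suc binomial_Suc_Suc)
  ultimately show ?thesis
    by simp
qed

lemma sums_harm2_sin_sq_tan:
  assumes "0 \<le> t" "t < pi/2"
  shows "(\<lambda>n. let k = Suc n in harm2 (k - 1) * (4 * sin t ^ 2) ^ k / (real k * real ((2*k) choose k)))
           sums (4/3 * tan t * t^3)"
proof -
  have "cos t > 0"
    using assms by (intro cos_gt_zero_pi) auto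
  have "(\<lambda>n. real n * arcsin_pow4_coeffs n * sin t ^ n) sums
          (sin t * powser_val (diffs arcsin_pow4_coeffs) (sin t))"
    using assms
    by (intro sums_index_times_coeff sums_powser_val powser_conv_unit_diffs
        powser_conv_unit_arcsin_pow4 abs_sin_less_one) simp
  also have "sin t * powser_val (diffs arcsin_pow4_coeffs) (sin t) = 8/3 * tan t * t^3"
    using powser_val_arcsin_pow4_sin(1)[OF assms] \<open>cos t > 0\<close> by (simp add: tan_def field_simps)
  finally have sums: "(\<lambda>n. real n * arcsin_pow4_coeffs n * sin t ^ n) sums (8/3 * tan t * t^3)" .
  have "(\<lambda>n. even_coeffs (\<lambda>k. real k * harm2 (k - 1) * central_binomial_recip k) n * sin t ^ n) =
      (\<lambda>n. real n * arcsin_pow4_coeffs n * sin t ^ n / 2)"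
    by (rule ext) (auto simp: arcsin_pow4_coeffs_def even_coeffs_def elim!: evenE)
  then have "(\<lambda>n. even_coeffs (\<lambda>k. real k * harm2 (k - 1) * central_binomial_recip k) n * sin t ^ n)
               sums (4/3 * tan t * t^3)"
    using sums_divide[OF sums, of 2] by (simp add: mult.assoc)
  then have "(\<lambda>n. real (Suc n) * harm2 (Suc n - 1) * central_binomial_recip (Suc n) * sin t ^ (2 * Suc n))
               sums (4/3 * tan t * t^3)"
    by (rule sums_even_coeffs_Suc) simp
  moreover have "real (Suc n) * harm2 (Suc n - 1) * central_binomial_recip (Suc n) * sin t ^ (2 * Suc n) =
      (let k = Suc n in harm2 (k - 1) * (4 * sin t ^ 2) ^ k / (real k * real ((2*k) choose k)))" for n
    by (simp add: Let_def central_binomial_recip_def power_mult power_mult_distrib power2_eq_square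
        del: of_nat_Suc binomial_Suc_Suc)
  ultimately show ?thesis
    by simp
qed

section \<open>The series in x and its Fibonacci--Lucas specializations\<close>

lemma arcsin_half_sqrt:
  fixes x :: real
  assumes "0 \<le> x" "x < 4"
  defines "t \<equiv> arcsin (sqrt x / 2)"
  shows "0 \<le> t" "t < pi/2" "4 * sin t ^ 2 = x" "tan t = sqrt (x / (4 - x))"
proof -
  have "sqrt x < sqrt 4"
    using assms by (subst real_sqrt_less_iff) simp
  then have s: "0 \<le> sqrt x / 2" "sqrt x / 2 < 1"
    using assms by simp_all
  have "- 1 < sqrt x / 2"
    using s(1) by linarith
  show "0 \<le> t"
    unfolding t_def using s by (intro arcsin_nonneg) auto
  show "t < pi/2"
    unfolding t_def using arcsin_lt_bounded \<open>- 1 < sqrt x / 2\<close> s(2) by blast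
  have sin: "sin t = sqrt x / 2"
    unfolding t_def using \<open>- 1 < sqrt x / 2\<close> s(2) by (intro sin_arcsin) auto
  show "4 * sin t ^ 2 = x"
    unfolding sin using assms by (simp add: power_divide)
  have "cos t = sqrt (1 - (sqrt x / 2)^2)"
    unfolding t_def using \<open>- 1 < sqrt x / 2\<close> s(2) by (intro cos_arcsin) auto
  also have "1 - (sqrt x / 2)^2 = (4 - x) / 4"
    using assms by (simp add: power_divide field_simps)
  also have "sqrt ((4 - x) / 4) = sqrt (4 - x) / 2"
    by (simp add: real_sqrt_divide)
  finally show "tan t = sqrt (x / (4 - x))"
    by (simp add: tan_def sin real_sqrt_divide)
qed

lemma sums_harm2_central_binomial:
  fixes x :: real
  assumes "0 \<le> x" "x < 4"
  shows "(\<lambda>n. let k = Suc n in harm2 (k - 1) * x ^ k / (real k * real ((2*k) choose k)))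
           sums (4/3 * sqrt (x / (4 - x)) * (arcsin (sqrt x / 2))^3)"
  using sums_harm2_sin_sq_tan[OF arcsin_half_sqrt(1,2)[OF assms]]
  unfolding arcsin_half_sqrt(3,4)[OF assms] .

lemma sums_harm2_sin_sq_combination:
  assumes "0 \<le> a" "a < pi/2" "0 \<le> b" "b < pi/2"
    and \<alpha>: "4 * sin a ^ 2 = \<alpha>" and \<beta>: "4 * sin b ^ 2 = \<beta>"
    and c: "\<And>k. c k = p * \<alpha> ^ k + q * \<beta> ^ k"
    and S: "S = 2/3 * (p * a^4 + q * b^4)"
  shows "(\<lambda>n. let k = Suc n in c k * harm2 (k - 1) / ((real k)^2 * real ((2*k) choose k))) sums S"
proof -
  have "(\<lambda>n. p * (let k = Suc n in harm2 (k - 1) * \<alpha> ^ k / ((real k)^2 * real ((2*k) choose k)))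
           + q * (let k = Suc n in harm2 (k - 1) * \<beta> ^ k / ((real k)^2 * real ((2*k) choose k))))
        sums (p * (2/3 * a^4) + q * (2/3 * b^4))"
    unfolding \<alpha>[symmetric] \<beta>[symmetric] using assms(1-4)
    by (intro sums_add sums_mult sums_harm2_sin_sq)
  then show ?thesis
    unfolding S c by (simp add: Let_def algebra_simps add_divide_distrib)
qed

lemma four_sin_sq: "4 * sin x ^ 2 = 2 - 2 * cos (2 * x :: real)"
  by (simp add: cos_double_sin)

lemma cos_pi_div_5: "cos (pi/5) = (1 + sqrt 5) / 4"
proof -
  define c where "c = cos (pi/5)"
  have "c > 0"
    unfolding c_def using pi_gt_zero by (intro cos_gt_zero_pi) linarith+
  have "cos (3 * (pi/5)) = - cos (2 * (pi/5))"
    using cos_pi_minus[of "2 * (pi/5)"] by (simp add: field_simps)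
  then have "4 * c^3 - 3 * c = - (2 * c^2 - 1)"
    unfolding c_def cos_treble_cos cos_double_cos .
  then have "(c + 1) * (4 * c^2 - 2 * c - 1) = 0"
    by (simp add: algebra_simps power2_eq_square power3_eq_cube)
  then have q: "4 * c^2 - 2 * c - 1 = 0"
    using \<open>c > 0\<close> by simp
  have "4 * c - 1 \<ge> 0"
  proof (rule ccontr)
    assume "\<not> 4 * c - 1 \<ge> 0"
    then have "c * c < (1/4) * (1/4)"
      using \<open>c > 0\<close> by (intro mult_strict_mono) auto
    then show False
      using q \<open>c > 0\<close> by (simp add: power2_eq_square)
  qed
  moreover have "(4 * c - 1)^2 = 5"
    using q by (simp add: algebra_simps power2_eq_square)
  ultimately have "sqrt 5 = 4 * c - 1"
    by (intro real_sqrt_unique) auto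
  then show ?thesis
    unfolding c_def by simp
qed

lemma cos_2pi_div_5: "cos (2 * pi/5) = (sqrt 5 - 1) / 4"
proof -
  have "cos (2 * pi/5) = 2 * cos (pi/5)^2 - 1"
    using cos_double_cos[of "pi/5"] by simp
  also have "\<dots> = (sqrt 5 - 1) / 4"
    unfolding cos_pi_div_5 by (simp add: power2_eq_square field_simps)
  finally show ?thesis .
qed

lemma four_sin_sq_pi_div_10: "4 * sin (pi/10) ^ 2 = (3 - sqrt 5) / 2"
proof -
  have "2 * (pi/10) = pi/5"
    by simp
  then show ?thesis
    unfolding four_sin_sq by (simp only: cos_pi_div_5) (simp add: field_simps)
qed

lemma four_sin_sq_3pi_div_10: "4 * sin (3 * pi/10) ^ 2 = (3 + sqrt 5) / 2"
proof -
  have "2 * (3 * pi/10) = pi - 2 * pi/5"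
    by simp
  then show ?thesis
    unfolding four_sin_sq by (simp only: cos_pi_minus cos_2pi_div_5) (simp add: field_simps)
qed

lemma four_sin_sq_pi_div_5: "4 * sin (pi/5) ^ 2 = (5 - sqrt 5) / 2"
proof -
  have "2 * (pi/5) = 2 * pi/5"
    by simp
  then show ?thesis
    unfolding four_sin_sq by (simp only: cos_2pi_div_5) (simp add: field_simps)
qed

lemma four_sin_sq_2pi_div_5: "4 * sin (2 * pi/5) ^ 2 = (5 + sqrt 5) / 2"
proof -
  have "2 * (2 * pi/5) = pi - pi/5"
    by simp
  then show ?thesis
    unfolding four_sin_sq by (simp only: cos_pi_minus cos_pi_div_5) (simp add: field_simps)
qed

lemma power_Suc_Suc_of_golden:
  fixes x :: real
  assumes "x^2 = x + 1"
  shows "x ^ Suc (Suc n) = x ^ Suc n + x ^ n"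
proof -
  have "x ^ Suc (Suc n) = x^2 * x^n"
    by (simp add: power2_eq_square)
  also have "\<dots> = x ^ Suc n + x ^ n"
    unfolding assms by (simp add: algebra_simps)
  finally show ?thesis .
qed

lemma lucas_closed_form: "real (lucas n) = ((1 + sqrt 5)/2)^n + ((1 - sqrt 5)/2)^n"
proof (induction n rule: lucas.induct)
  case 1
  show ?case
    by simp
next
  case 2
  show ?case
    by (simp add: field_simps)
next
  case (3 n)
  have "((1 + sqrt 5)/2)^2 = (1 + sqrt 5)/2 + 1" "((1 - sqrt 5)/2)^2 = (1 - sqrt 5)/2 + 1"
    by (simp_all add: power2_eq_square field_simps)
  then show ?case
    using 3 by (simp only: power_Suc_Suc_of_golden lucas.simps of_nat_add)
qed

lemma golden_sq: "((1 + sqrt 5)/2)^2 = (3 + sqrt 5)/2" "((1 - sqrt 5)/2)^2 = (3 - sqrt 5)/2"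
  by (simp_all add: power2_eq_square field_simps)

lemma lucas_double: "real (lucas (2*k)) = ((3 + sqrt 5)/2)^k + ((3 - sqrt 5)/2)^k"
  unfolding lucas_closed_form power_mult golden_sq ..

lemma fib_double: "real (fib (2*k)) = (((3 + sqrt 5)/2)^k - ((3 - sqrt 5)/2)^k) / sqrt 5"
  unfolding fib_closed_form power_mult golden_sq ..

lemma v_seq_u_seq_closed_form:
  "v_seq k = ((5 + sqrt 5)/2)^k + ((5 - sqrt 5)/2)^k"
  "u_seq k = (((5 + sqrt 5)/2)^k - ((5 - sqrt 5)/2)^k) / sqrt 5"
proof -
  define p :: real where "p = (1 + sqrt 5)/2"
  define q :: real where "q = (1 - sqrt 5)/2"
  have a: "((5 + sqrt 5)/2)^k = sqrt 5 ^ k * p^k"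
    unfolding p_def power_mult_distrib[symmetric] by (simp add: field_simps)
  have b: "((5 - sqrt 5)/2)^k = (-1)^k * sqrt 5 ^ k * q^k"
    unfolding q_def power_mult_distrib[symmetric] by (simp add: field_simps)
  have L: "real (lucas k) = p^k + q^k"
    unfolding p_def q_def by (rule lucas_closed_form)
  have F: "real (fib k) = (p^k - q^k) / sqrt 5"
    unfolding p_def q_def by (rule fib_closed_form)
  have "v_seq k = ((5 + sqrt 5)/2)^k + ((5 - sqrt 5)/2)^k \<and>
        u_seq k = (((5 + sqrt 5)/2)^k - ((5 - sqrt 5)/2)^k) / sqrt 5"
  proof (cases "even k")
    case True
    then obtain m where k: "k = 2*m"
      by blast
    have "sqrt 5 ^ k = 5^m"
      unfolding k power_mult by simp
    then have "((5 + sqrt 5)/2)^k + ((5 - sqrt 5)/2)^k = 5^m * (p^k + q^k)"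
      and "(((5 + sqrt 5)/2)^k - ((5 - sqrt 5)/2)^k) / sqrt 5 = 5^m * ((p^k - q^k) / sqrt 5)"
      unfolding a b using True by (simp_all add: algebra_simps diff_divide_distrib)
    then show ?thesis
      unfolding v_seq_def u_seq_def L F using True k by simp
  next
    case False
    then obtain m where k: "k = 2*m + 1"
      using oddE by blast
    have root: "sqrt 5 ^ k = 5^m * sqrt 5"
      unfolding k power_add power_mult by simp
    have sqrt5_sq: "sqrt 5 * (sqrt 5 * x) = 5 * x" for x :: real
      by (simp add: mult.assoc[symmetric])
    have "((5 + sqrt 5)/2)^k + ((5 - sqrt 5)/2)^k = 5^(m + 1) * ((p^k - q^k) / sqrt 5)"
      and "(((5 + sqrt 5)/2)^k - ((5 - sqrt 5)/2)^k) / sqrt 5 = 5^m * (p^k + q^k)"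
      unfolding a b root using False by (simp_all add: field_simps sqrt5_sq)
    moreover have "(k + 1) div 2 = m + 1" "(k - 1) div 2 = m"
      using k by auto
    ultimately show ?thesis
      unfolding v_seq_def u_seq_def L F using False by simp
  qed
  then show "v_seq k = ((5 + sqrt 5)/2)^k + ((5 - sqrt 5)/2)^k"
    and "u_seq k = (((5 + sqrt 5)/2)^k - ((5 - sqrt 5)/2)^k) / sqrt 5"
    by simp_all
qed

theorem theorem1p1:
  shows "(\<lambda>n. let k = Suc n in harm2 (k - 1) / ((real k)^2 * real ((2*k) choose k)))
           sums (pi^4 / 1944)
    \<and> (\<lambda>n. let k = Suc n in real (lucas (2*k)) * harm2 (k - 1) / ((real k)^2 * real ((2*k) choose k)))
           sums (41 * pi^4 / 7500)
    \<and> (\<lambda>n. let k = Suc n in real (fib (2*k)) * harm2 (k - 1) / ((real k)^2 * real ((2*k) choose k)))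
           sums (2 * pi^4 / (375 * sqrt 5))
    \<and> (\<lambda>n. let k = Suc n in v_seq k * harm2 (k - 1) / ((real k)^2 * real ((2*k) choose k)))
           sums (34 * pi^4 / 1875)
    \<and> (\<lambda>n. let k = Suc n in u_seq k * harm2 (k - 1) / ((real k)^2 * real ((2*k) choose k)))
           sums (2 * pi^4 / (125 * sqrt 5))
    \<and> (\<forall>x::real. 0 \<le> x \<and> x < 4 \<longrightarrow>
           (\<lambda>n. let k = Suc n in harm2 (k - 1) * x ^ k / (real k * real ((2*k) choose k)))
             sums (4/3 * sqrt (x / (4 - x)) * (arcsin (sqrt x / 2))^3))
    \<and> (\<lambda>n. let k = Suc n in harm2 (k - 1) / (real k * real ((2*k) choose k)))
           sums (pi^3 / (162 * sqrt 3))
    \<and> (\<lambda>n. let k = Suc n in 3 ^ k * harm2 (k - 1) / (real k * real ((2*k) choose k)))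
           sums (4 * pi^3 / (27 * sqrt 3))"
  using pi_gt_zero
  apply (intro conjI allI impI)
  subgoal
    using sums_harm2_sin_sq[of "pi/6"] by (simp add: sin_30 power_divide)
  subgoal
    by (rule sums_harm2_sin_sq_combination[where p = 1 and q = 1,
          OF _ _ _ _ four_sin_sq_3pi_div_10 four_sin_sq_pi_div_10])
       (simp_all add: lucas_double power_divide power_mult_distrib)
  subgoal
    by (rule sums_harm2_sin_sq_combination[where p = "1 / sqrt 5" and q = "- 1 / sqrt 5",
          OF _ _ _ _ four_sin_sq_3pi_div_10 four_sin_sq_pi_div_10])
       (simp_all add: fib_double power_divide power_mult_distrib diff_divide_distrib)
  subgoal
    by (rule sums_harm2_sin_sq_combination[where p = 1 and q = 1,
          OF _ _ _ _ four_sin_sq_2pi_div_5 four_sin_sq_pi_div_5])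
       (simp_all add: v_seq_u_seq_closed_form power_divide power_mult_distrib)
  subgoal
    by (rule sums_harm2_sin_sq_combination[where p = "1 / sqrt 5" and q = "- 1 / sqrt 5",
          OF _ _ _ _ four_sin_sq_2pi_div_5 four_sin_sq_pi_div_5])
       (simp_all add: v_seq_u_seq_closed_form power_divide power_mult_distrib diff_divide_distrib)
  subgoal
    by (rule sums_harm2_central_binomial) simp_all
  subgoal
    using sums_harm2_sin_sq_tan[of "pi/6"] by (simp add: sin_30 tan_30 power_divide)
  subgoal
  proof -
    have "4/3 * tan (pi/3) * (pi/3)^3 = 4 * pi^3 / (27 * sqrt 3)"
      by (simp add: tan_60 power_divide field_simps power3_eq_cube)
    then show ?thesis
      using sums_harm2_sin_sq_tan[of "pi/3"] by (simp add: sin_60 power_divide mult.commute)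
  qed
  done

end
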